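(* For every $n$ there exists a binary matrix $M \in \{0,1\}^{n \times n}$ with twin-width at most $3$ whose row-Hamming-coherence and column-Hamming-coherence satisfy $\mathscr{H}^r(M), \mathscr{H}^c(M) \in \Omega(n \log n)$.
   Context: The Hamming distance of $u,v\in\{0,1\}^n$ is $d(u,v)=\sum_{i=1}^n|u_i-v_i|$. Let $r^{(1)},\dots,r^{(n)}$ be the rows of $M$. For a permutation $\pi$ of $[n]$, the row-Hamming-sum is $\mathscr{H}^r_\pi(M)=\sum_{i=1}^{n-1} d(r^{(\pi(i))},r^{(\pi(i+1))})$, and the row-Hamming-coherence is $\mathscr{H}^r(M)=\min_\pi \mathscr{H}^r_\pi(M)$. The column-Hamming-coherence $\mathscr{H}^c(M)$ is defined analogously using the columns. Twin-width. A division of an $n\times n$ matrix $M$ is a pair $(\mathcal{R},\mathscr{C})$ of partitions of $[n]$ into contiguous non-empty intervals; the cell $(i,j)$ is the submatrix with rows in the $i$-th interval of $\mathcal{R}$ and columns in the $j$-th interval of $\mathscr{C}$; a cell is constant if all its entries are equal. A row (resp. column) of the division is the set of cells sharing a given interval of $\mathcal{R}$ (resp. $\mathscr{C}$). A merge sequence is a sequence of divisions $(\mathcal{R}_{2n-1},\mathscr{C}_{2n-1}),\dots,(\mathcal{R}_1,\mathscr{C}_1)$ starting from the singleton partitions, ending with $\mathcal{R}_1=\mathscr{C}_1=\{[n]\}$, each obtained from the previous by merging two adjacent intervals of either the row or the column partition. It is $d$-wide if in every division every row and every column contains at most $d$ non-constant cells. $M$ is $d$-twin-ordered if it admits a $d$-wide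 merge sequence; the twin-width of $M$ is the least $d$ such that some permutation of the rows and of the columns of $M$ is $d$-twin-ordered. *)

theory Defs
  imports Complex_Main "HOL-Combinatorics.Permutations"
begin

text \<open>An n x n binary matrix is modelled as a function M :: nat => nat => bool,
  with rows and columns indexed by {..<n} (0-based); True stands for 1, False for 0.
  Entries outside {..<n} x {..<n} are irrelevant.\<close>

type_synonym bmat = "nat \<Rightarrow> nat \<Rightarrow> bool"

definition transpose_mat :: "bmat \<Rightarrow> bmat" where
  "transpose_mat M = (\<lambda>i j. M j i)"

definition hamming :: "nat \<Rightarrow> (nat \<Rightarrow> bool) \<Rightarrow> (nat \<Rightarrow> bool) \<Rightarrow> nat" where
  "hamming n u v = (\<Sum>i<n. if u i = v i then 0 else 1)"

definition row_hamming_sum :: "nat \<Rightarrow> bmat \<Rightarrow> (nat \<Rightarrow> nat) \<Rightarrow> nat" where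
  "row_hamming_sum n M \<pi> = (\<Sum>i<n - 1. hamming n (M (\<pi> i)) (M (\<pi> (Suc i))))"

definition row_hamming_coherence :: "nat \<Rightarrow> bmat \<Rightarrow> nat" where
  "row_hamming_coherence n M = Min {row_hamming_sum n M \<pi> | \<pi>. \<pi> permutes {..<n}}"

definition col_hamming_coherence :: "nat \<Rightarrow> bmat \<Rightarrow> nat" where
  "col_hamming_coherence n M = row_hamming_coherence n (transpose_mat M)"

definition interval_partition :: "nat \<Rightarrow> nat set set \<Rightarrow> bool" where
  "interval_partition n P \<longleftrightarrow> \<Union>P = {..<n} \<and>
     (\<forall>A\<in>P. A \<noteq> {} \<and> (\<exists>a b. A = {a..<b})) \<and>
     (\<forall>A\<in>P. \<forall>B\<in>P. A \<noteq> B \<longrightarrow> A \<inter> B = {})"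

definition merge_adjacent :: "nat set set \<Rightarrow> nat set set \<Rightarrow> bool" where
  "merge_adjacent P P' \<longleftrightarrow> (\<exists>A\<in>P. \<exists>B\<in>P. A \<noteq> B \<and> (\<exists>a b. A \<union> B = {a..<b}) \<and>
      P' = insert (A \<union> B) (P - {A, B}))"

type_synonym division = "nat set set \<times> nat set set"

definition division_step :: "division \<Rightarrow> division \<Rightarrow> bool" where
  "division_step D D' \<longleftrightarrow>
     (merge_adjacent (fst D) (fst D') \<and> snd D' = snd D) \<or>
     (fst D' = fst D \<and> merge_adjacent (snd D) (snd D'))"

definition constant_cell :: "bmat \<Rightarrow> nat set \<Rightarrow> nat set \<Rightarrow> bool" where
  "constant_cell M X Y \<longleftrightarrow> (\<forall>i\<in>X. \<forall>j\<in>Y. \<forall>i'\<in>X. \<forall>j'\<in>Y. M i j = M i' j')"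

definition d_wide :: "nat \<Rightarrow> bmat \<Rightarrow> division \<Rightarrow> bool" where
  "d_wide d M D \<longleftrightarrow>
     (\<forall>X\<in>fst D. card {Y\<in>snd D. \<not> constant_cell M X Y} \<le> d) \<and>
     (\<forall>Y\<in>snd D. card {X\<in>fst D. \<not> constant_cell M X Y} \<le> d)"

definition singleton_partition :: "nat \<Rightarrow> nat set set" where
  "singleton_partition n = {{i} | i. i < n}"

definition merge_sequence :: "nat \<Rightarrow> division list \<Rightarrow> bool" where
  "merge_sequence n ds \<longleftrightarrow> ds \<noteq> [] \<and>
     hd ds = (singleton_partition n, singleton_partition n) \<and>
     last ds = ({{..<n}}, {{..<n}}) \<and>
     (\<forall>k. Suc k < length ds \<longrightarrow> division_step (ds ! k) (ds ! Suc k))"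

definition twin_ordered :: "nat \<Rightarrow> nat \<Rightarrow> bmat \<Rightarrow> bool" where
  "twin_ordered n d M \<longleftrightarrow> (\<exists>ds. merge_sequence n ds \<and> (\<forall>D\<in>set ds. d_wide d M D))"

definition twin_width :: "nat \<Rightarrow> bmat \<Rightarrow> nat" where
  "twin_width n M = (LEAST d. \<exists>\<sigma> \<tau>. \<sigma> permutes {..<n} \<and> \<tau> permutes {..<n} \<and>
       twin_ordered n d (\<lambda>i j. M (\<sigma> i) (\<tau> j)))"

end

(*
  The witness is the comparability matrix of the complete binary tree with 2^K - 1 nodes
  (x and y are related iff one is an ancestor of the other), with the nodes numbered in in-order
  and padded by zero rows and columns up to n, where 2^K - 1 <= n < 2^(K+1) - 1.

  Hamming coherence: a node x of height h is related to all nodes of its two child subtrees,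
  each of size 2^h - 1, whereas every other row is 0 on one of these subtrees or, if it belongs
  to an ancestor, is 1 on the opposite child subtree of that ancestor, where row x is 0.  So the
  row of x is at distance at least 2^h - 1 from every other row, and any ordering of the rows
  pays this for all rows but the last.  Summing over the tree gives about K 2^(K-1), which is
  Omega(n log n); the matrix is symmetric, so the same holds for the columns.

  Twin-width: rows and columns are merged level by level, so that at stage h the parts are the
  subtrees of height h and the single nodes above them.  A row part inside a subtree of height
  h+1 can only be non-constant against column parts inside the same subtree, and these start
  at one of three boundary points of that subtree; hence every division is 3-wide.
*)
theory Submission
  imports Defs
begin

section \<open>Hamming coherence\<close>

lemma card_le_hamming:
  assumes "Z \<subseteq> {..<n}" "\<And>z. z \<in> Z \<Longrightarrow> u z \<noteq> v z"
  shows "card Z \<le> hamming n u v"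
proof -
  have "card Z \<le> card ({..<n} - {i. u i = v i})"
    using assms by (intro card_mono) auto
  also have "\<dots> = hamming n u v"
    unfolding hamming_def by (simp add: sum.If_cases Diff_eq)
  finally show ?thesis .
qed

lemma le_row_hamming_coherence:
  assumes "\<And>\<pi>. \<pi> permutes {..<n} \<Longrightarrow> L \<le> row_hamming_sum n M \<pi>"
  shows "L \<le> row_hamming_coherence n M"
proof -
  let ?S = "{row_hamming_sum n M \<pi> | \<pi>. \<pi> permutes {..<n}}"
  have "?S = (\<lambda>\<pi>. row_hamming_sum n M \<pi>) ` {\<pi>. \<pi> permutes {..<n}}"
    by auto
  then have "finite ?S"
    using finite_permutations[of "{..<n}"] by simp
  moreover have "?S \<noteq> {}"
    using permutes_id[of "{..<n}"] by blast
  ultimately show ?thesis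
    unfolding row_hamming_coherence_def using assms by (auto simp: Min_ge_iff)
qed

lemma sum_le_row_hamming_sum:
  fixes f :: "nat \<Rightarrow> nat"
  assumes \<pi>: "\<pi> permutes {..<n}" and "0 < n"
    and differ: "\<And>x y. x < n \<Longrightarrow> y < n \<Longrightarrow> y \<noteq> x \<Longrightarrow> f x \<le> hamming n (M x) (M y)"
  shows "(\<Sum>x<n. f x) \<le> row_hamming_sum n M \<pi> + f (\<pi> (n - 1))"
proof -
  have "(\<Sum>x<n. f x) = (\<Sum>i<n. f (\<pi> i))"
    using sum.reindex_bij_betw[OF permutes_imp_bij[OF \<pi>], of f] by simp
  also have "\<dots> = (\<Sum>i<n - 1. f (\<pi> i)) + f (\<pi> (n - 1))"
    using \<open>0 < n\<close> by (metis Suc_diff_1 sum.lessThan_Suc)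
  also have "(\<Sum>i<n - 1. f (\<pi> i)) \<le> row_hamming_sum n M \<pi>"
    unfolding row_hamming_sum_def
  proof (rule sum_mono)
    fix i
    assume "i \<in> {..<n - 1}"
    then have "\<pi> i < n" "\<pi> (Suc i) < n" "\<pi> (Suc i) \<noteq> \<pi> i"
      using permutes_in_image[OF \<pi>] permutes_inj[OF \<pi>] by (auto dest: injD)
    then show "f (\<pi> i) \<le> hamming n (M (\<pi> i)) (M (\<pi> (Suc i)))"
      by (rule differ)
  qed
  finally show ?thesis
    by simp
qed

lemma sum_le_row_hamming_coherence:
  fixes f :: "nat \<Rightarrow> nat"
  assumes "0 < n" and bound: "\<And>x. f x \<le> B"
    and differ: "\<And>x y. x < n \<Longrightarrow> y < n \<Longrightarrow> y \<noteq> x \<Longrightarrow> f x \<le> hamming n (M x) (M y)"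
  shows "(\<Sum>x<n. f x) \<le> row_hamming_coherence n M + B"
proof -
  have "(\<Sum>x<n. f x) - B \<le> row_hamming_coherence n M"
  proof (rule le_row_hamming_coherence)
    fix \<pi>
    assume "\<pi> permutes {..<n}"
    then have "(\<Sum>x<n. f x) \<le> row_hamming_sum n M \<pi> + f (\<pi> (n - 1))"
      using \<open>0 < n\<close> differ by (rule sum_le_row_hamming_sum)
    with bound[of "\<pi> (n - 1)"] show "(\<Sum>x<n. f x) - B \<le> row_hamming_sum n M \<pi>"
      by linarith
  qed
  then show ?thesis
    by linarith
qed

section \<open>Divisions given by sets of cut positions\<close>

lemma constant_cell_transpose: "constant_cell (transpose_mat M) Y X \<longleftrightarrow> constant_cell M X Y"
  unfolding constant_cell_def transpose_mat_def by blast

lemma constant_cell_singleton_row: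
  "(\<And>j j'. j \<in> Y \<Longrightarrow> j' \<in> Y \<Longrightarrow> M x j = M x j') \<Longrightarrow> constant_cell M {x} Y"
  unfolding constant_cell_def by blast

lemma constant_cell_if_all_False:
  "(\<And>i j. i \<in> X \<Longrightarrow> j \<in> Y \<Longrightarrow> \<not> M i j) \<Longrightarrow> constant_cell M X Y"
  unfolding constant_cell_def by blast

lemma card_meeting_le:
  assumes disj: "\<And>X Y z. X \<in> Q \<Longrightarrow> Y \<in> Q \<Longrightarrow> z \<in> X \<Longrightarrow> z \<in> Y \<Longrightarrow> X = Y"
    and "finite S"
  shows "card {Y \<in> Q. Y \<inter> S \<noteq> {}} \<le> card S"
proof -
  define pick where "pick Y = (SOME s. s \<in> Y \<inter> S)" for Y
  have pick: "pick Y \<in> Y \<inter> S" if "Y \<inter> S \<noteq> {}" for Y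
    using that unfolding pick_def by (metis ex_in_conv someI)
  have "inj_on pick {Y \<in> Q. Y \<inter> S \<noteq> {}}"
  proof (rule inj_onI)
    fix X Y
    assume X: "X \<in> {Y \<in> Q. Y \<inter> S \<noteq> {}}" and Y: "Y \<in> {Y \<in> Q. Y \<inter> S \<noteq> {}}"
      and "pick X = pick Y"
    moreover have "pick X \<in> X" "pick Y \<in> Y"
      using pick X Y by auto
    ultimately have "pick X \<in> X" "pick X \<in> Y"
      by simp_all
    with X Y show "X = Y"
      using disj by blast
  qed
  moreover have "pick ` {Y \<in> Q. Y \<inter> S \<noteq> {}} \<subseteq> S"
    using pick by blast
  ultimately show ?thesis
    using card_inj_on_le \<open>finite S\<close> by blast
qed

text \<open>A set D \<subseteq> {1..<n} of cut positions determines the partition of {..<n} into maximal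
  intervals not cut by D; removing one cut merges two adjacent intervals.\<close>

definition cut_intervals :: "nat \<Rightarrow> nat set \<Rightarrow> nat set set" where
  "cut_intervals n D = {{a..<b} | a b. a < b \<and> (a = 0 \<or> a \<in> D) \<and> (b = n \<or> b \<in> D) \<and>
     (\<forall>d\<in>D. d \<le> a \<or> b \<le> d)}"

lemma cut_intervalsE:
  assumes "X \<in> cut_intervals n D"
  obtains a b where "X = {a..<b}" "a < b" "a = 0 \<or> a \<in> D" "b = n \<or> b \<in> D"
    "\<forall>d\<in>D. d \<le> a \<or> b \<le> d"
  using assms unfolding cut_intervals_def by blast

lemma cut_intervalsI:
  assumes "a < b" "a = 0 \<or> a \<in> D" "b = n \<or> b \<in> D" "\<forall>d\<in>D. d \<le> a \<or> b \<le> d"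
  shows "{a..<b} \<in> cut_intervals n D"
  using assms unfolding cut_intervals_def by blast

lemma finite_cut_intervals:
  assumes "D \<subseteq> {1..<n}"
  shows "finite (cut_intervals n D)"
proof -
  have "cut_intervals n D \<subseteq> Pow {..<n}"
    using assms by (auto elim!: cut_intervalsE)
  then show ?thesis
    by (rule finite_subset) simp
qed

lemma cut_interval_start_le:
  assumes "X \<in> cut_intervals n D" "m \<in> D" "m \<in> X" "z \<in> X"
  shows "m \<le> z"
  using assms by (auto elim!: cut_intervalsE)

lemma cut_intervals_disjoint:
  assumes D: "D \<subseteq> {1..<n}" and X: "X \<in> cut_intervals n D" and Y: "Y \<in> cut_intervals n D"
    and z: "z \<in> X" "z \<in> Y"
  shows "X = Y"
proof -
  have start_le: "a' \<le> a" if "U \<in> cut_intervals n D" "U = {a..<b}" "a' = 0 \<or> a' \<in> D"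
    "z \<in> U" "z \<in> {a'..<b'}" for U a b a' b'
  proof (rule ccontr)
    assume "\<not> a' \<le> a"
    then have "a' \<in> D" "a' \<in> U" "a \<in> U"
      using that(2-5) by auto
    then show False
      using cut_interval_start_le[OF that(1)] \<open>\<not> a' \<le> a\<close> by blast
  qed
  have end_le: "b' \<le> b" if "V \<in> cut_intervals n D" "V = {a'..<b'}" "b = n \<or> b \<in> D" "b' \<le> n"
    "z \<in> {a..<b}" "z \<in> V" for V a b a' b'
  proof (rule ccontr)
    assume "\<not> b' \<le> b"
    then have "b \<in> D" "b \<in> V"
      using that(2-6) by auto
    then show False
      using cut_interval_start_le[OF that(1) _ _ that(6)] that(5) by fastforce
  qed
  obtain a b where X': "X = {a..<b}" "a = 0 \<or> a \<in> D" "b = n \<or> b \<in> D"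
    using X by (rule cut_intervalsE)
  obtain a' b' where Y': "Y = {a'..<b'}" "a' = 0 \<or> a' \<in> D" "b' = n \<or> b' \<in> D"
    using Y by (rule cut_intervalsE)
  have "b \<le> n" "b' \<le> n"
    using X'(3) Y'(3) D by auto
  have "a = a'" "b = b'"
    using start_le[OF X X'(1) Y'(2)] start_le[OF Y Y'(1) X'(2)]
      end_le[OF Y Y'(1) X'(3) \<open>b' \<le> n\<close>] end_le[OF X X'(1) Y'(3) \<open>b \<le> n\<close>] z X'(1) Y'(1)
    by (metis antisym)+
  then show ?thesis
    using X'(1) Y'(1) by simp
qed

lemma cut_intervals_all_cuts: "cut_intervals n {1..<n} = singleton_partition n"
proof (intro set_eqI iffI)
  fix X
  assume "X \<in> cut_intervals n {1..<n}"
  then obtain a b where ab: "X = {a..<b}" "a < b" "b = n \<or> b \<in> {1..<n}"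
    "\<forall>d\<in>{1..<n}. d \<le> a \<or> b \<le> d"
    by (rule cut_intervalsE)
  then have "b = Suc a"
    using ab(4)[rule_format, of "Suc a"] by fastforce
  then show "X \<in> singleton_partition n"
    using ab unfolding singleton_partition_def by auto
next
  fix X
  assume "X \<in> singleton_partition n"
  then obtain i where i: "X = {i}" "i < n"
    unfolding singleton_partition_def by blast
  then have "{i..<Suc i} \<in> cut_intervals n {1..<n}"
    by (intro cut_intervalsI) auto
  then show "X \<in> cut_intervals n {1..<n}"
    using i by simp
qed

lemma cut_intervals_no_cuts: "0 < n \<Longrightarrow> cut_intervals n {} = {{..<n}}"
  by (auto simp: cut_intervals_def atLeast0LessThan)

definition cut_division :: "nat \<Rightarrow> nat set \<times> nat set \<Rightarrow> division" where
  "cut_division n s = (cut_intervals n (fst s), cut_intervals n (snd s))"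

text \<open>Here a and b are the cuts adjacent to d, with 0 and n standing in for missing ones.\<close>

context
  fixes n d a b :: nat and D :: "nat set"
  assumes D: "D \<subseteq> {1..<n}" and d: "d \<in> D"
    and a: "a < d" "a = 0 \<or> a \<in> D" "\<And>e. e \<in> D \<Longrightarrow> e < d \<Longrightarrow> e \<le> a"
    and b: "d < b" "b = n \<or> b \<in> D" "\<And>e. e \<in> D \<Longrightarrow> d < e \<Longrightarrow> b \<le> e"
begin

lemma left_cut_interval: "{a..<d} \<in> cut_intervals n D"
proof (rule cut_intervalsI)
  show "\<forall>e\<in>D. e \<le> a \<or> d \<le> e"
    using a(3) not_le by blast
qed (use a d in auto)

lemma right_cut_interval: "{d..<b} \<in> cut_intervals n D"
proof (rule cut_intervalsI)
  show "\<forall>e\<in>D. e \<le> d \<or> b \<le> e"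
    using b(3) not_le by blast
qed (use b d in auto)

lemma merged_cut_interval: "{a..<b} \<in> cut_intervals n (D - {d})"
proof (rule cut_intervalsI)
  show "\<forall>e\<in>D - {d}. e \<le> a \<or> b \<le> e"
    using a(3) b(3) by (metis DiffE insertI1 linorder_neqE_nat)
qed (use a b in auto)

lemma cut_intervals_remove_subset:
  "cut_intervals n (D - {d}) \<subseteq> insert {a..<b} (cut_intervals n D - {{a..<d}, {d..<b}})"
proof
  fix X
  assume X_mem: "X \<in> cut_intervals n (D - {d})"
  then obtain a' b' where X: "X = {a'..<b'}" "a' < b'" "a' = 0 \<or> a' \<in> D - {d}"
    "b' = n \<or> b' \<in> D - {d}" "\<forall>e\<in>D - {d}. e \<le> a' \<or> b' \<le> e"
    by (rule cut_intervalsE)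
  have "d < n"
    using D d by auto
  show "X \<in> insert {a..<b} (cut_intervals n D - {{a..<d}, {d..<b}})"
  proof (cases "a' < d \<and> d < b'")
    case True
    then have "d \<in> X" "d \<in> {a..<b}"
      using X(1) a(1) b(1) by auto
    moreover have "D - {d} \<subseteq> {1..<n}"
      using D by blast
    ultimately have "X = {a..<b}"
      using cut_intervals_disjoint X_mem merged_cut_interval by blast
    then show ?thesis
      by simp
  next
    case False
    then have "X \<in> cut_intervals n D"
      unfolding X(1) using X by (intro cut_intervalsI) auto
    moreover have "X \<noteq> {a..<d}"
    proof
      assume "X = {a..<d}"
      then have "b' = d"
        using X(1,2) a(1) by (simp add: atLeastLessThan_eq_iff)
      then show False
        using X(4) \<open>d < n\<close> by simp
    qed
    moreover have "X \<noteq> {d..<b}"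
    proof
      assume "X = {d..<b}"
      then have "a' = d"
        using X(1,2) b(1) by (simp add: atLeastLessThan_eq_iff)
      then show False
        using X(3) a(1) by simp
    qed
    ultimately show ?thesis
      by simp
  qed
qed

lemma cut_intervals_remove_supset:
  "insert {a..<b} (cut_intervals n D - {{a..<d}, {d..<b}}) \<subseteq> cut_intervals n (D - {d})"
proof
  fix X
  assume "X \<in> insert {a..<b} (cut_intervals n D - {{a..<d}, {d..<b}})"
  then consider "X = {a..<b}" | "X \<in> cut_intervals n D" "X \<noteq> {a..<d}" "X \<noteq> {d..<b}"
    by blast
  then show "X \<in> cut_intervals n (D - {d})"
  proof cases
    case 1
    then show ?thesis
      using merged_cut_interval by simp
  next
    case 2
    then obtain a' b' where X: "X = {a'..<b'}" "a' < b'" "a' = 0 \<or> a' \<in> D" "b' = n \<or> b' \<in> D"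
      "\<forall>e\<in>D. e \<le> a' \<or> b' \<le> e"
      by (elim cut_intervalsE)
    have "a' \<noteq> d"
    proof
      assume "a' = d"
      then have "d \<in> X" "d \<in> {d..<b}"
        using X(1,2) b(1) by auto
      then have "X = {d..<b}"
        using cut_intervals_disjoint[OF D 2(1) right_cut_interval] by blast
      with 2(3) show False ..
    qed
    moreover have "b' \<noteq> d"
    proof
      assume "b' = d"
      then have "d - 1 \<in> X" "d - 1 \<in> {a..<d}"
        using X(1,2) a(1) by auto
      then have "X = {a..<d}"
        using cut_intervals_disjoint[OF D 2(1) left_cut_interval] by blast
      with 2(2) show False ..
    qed
    ultimately show ?thesis
      unfolding X(1) using X(2-5) by (intro cut_intervalsI) auto
  qed
qed

end

lemma merge_adjacent_remove_cut:
  assumes D: "D \<subseteq> {1..<n}" and d: "d \<in> D"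
  shows "merge_adjacent (cut_intervals n D) (cut_intervals n (D - {d}))"
proof -
  have "finite D"
    using D finite_subset by blast
  define a where "a = Max (insert 0 {e \<in> D. e < d})"
  define b where "b = Min (insert n {e \<in> D. d < e})"
  have a: "a < d" "a = 0 \<or> a \<in> D" "\<And>e. e \<in> D \<Longrightarrow> e < d \<Longrightarrow> e \<le> a"
    using Max_in[of "insert 0 {e \<in> D. e < d}"] D d \<open>finite D\<close> unfolding a_def by auto
  have b: "d < b" "b = n \<or> b \<in> D" "\<And>e. e \<in> D \<Longrightarrow> d < e \<Longrightarrow> b \<le> e"
    using Min_in[of "insert n {e \<in> D. d < e}"] D d \<open>finite D\<close> unfolding b_def by auto
  have "{a..<d} \<in> cut_intervals n D" "{d..<b} \<in> cut_intervals n D"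
    using left_cut_interval[OF D d a b] right_cut_interval[OF D d a b] by simp_all
  moreover have "{a..<d} \<union> {d..<b} = {a..<b}" "{a..<d} \<noteq> {d..<b}"
    using a(1) b(1) by auto
  moreover have "cut_intervals n (D - {d}) = insert {a..<b} (cut_intervals n D - {{a..<d}, {d..<b}})"
    using cut_intervals_remove_subset[OF D d a b] cut_intervals_remove_supset[OF D d a b] by blast
  ultimately show ?thesis
    unfolding merge_adjacent_def by metis
qed

inductive remove_cut :: "(nat set \<Rightarrow> nat set \<Rightarrow> bool) \<Rightarrow> nat set \<times> nat set \<Rightarrow> nat set \<times> nat set \<Rightarrow> bool"
  for P :: "nat set \<Rightarrow> nat set \<Rightarrow> bool" where
  remove_row_cut: "d \<in> Dr \<Longrightarrow> P (Dr - {d}) Dc \<Longrightarrow> remove_cut P (Dr, Dc) (Dr - {d}, Dc)"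
| remove_column_cut: "d \<in> Dc \<Longrightarrow> P Dr (Dc - {d}) \<Longrightarrow> remove_cut P (Dr, Dc) (Dr, Dc - {d})"

lemma remove_cut_target: "remove_cut P s t \<Longrightarrow> P (fst t) (snd t)"
  by (induction rule: remove_cut.induct) simp_all

lemma remove_cut_division_step:
  assumes "remove_cut P s t" "fst s \<subseteq> {1..<n}" "snd s \<subseteq> {1..<n}"
  shows "division_step (cut_division n s) (cut_division n t)"
  using assms
  by (induction rule: remove_cut.induct)
    (simp_all add: division_step_def cut_division_def merge_adjacent_remove_cut)

lemma merge_path_of_remove_cuts:
  assumes subset: "\<And>Dr Dc. P Dr Dc \<Longrightarrow> Dr \<subseteq> {1..<n} \<and> Dc \<subseteq> {1..<n}"
    and wide: "\<And>Dr Dc. P Dr Dc \<Longrightarrow> d_wide w M (cut_division n (Dr, Dc))"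
    and start: "P (fst s) (snd s)" and path: "(remove_cut P)\<^sup>*\<^sup>* s t"
  obtains ds where "ds \<noteq> []" "hd ds = cut_division n s" "last ds = cut_division n t"
    "successively division_step ds" "\<forall>D\<in>set ds. d_wide w M D"
proof -
  from path have "P (fst t) (snd t) \<and> (\<exists>ds. ds \<noteq> [] \<and> hd ds = cut_division n s \<and>
    last ds = cut_division n t \<and> successively division_step ds \<and> (\<forall>D\<in>set ds. d_wide w M D))"
  proof (induction rule: rtranclp_induct)
    case base
    show ?case
      using start wide[OF start] by (intro conjI exI[of _ "[cut_division n s]"]) simp_all
  next
    case (step t u)
    from step.IH have "P (fst t) (snd t)"
      by blast
    from step.IH obtain ds where ds: "ds \<noteq> []" "hd ds = cut_division n s"
      "last ds = cut_division n t" "successively division_step ds" "\<forall>D\<in>set ds. d_wide w M D"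
      by blast
    have "P (fst u) (snd u)"
      using step(2) by (rule remove_cut_target)
    then have "d_wide w M (cut_division n u)"
      using wide[of "fst u" "snd u"] by simp
    moreover have "division_step (last ds) (cut_division n u)"
      unfolding ds(3) using step(2) subset[OF \<open>P (fst t) (snd t)\<close>]
      by (intro remove_cut_division_step) simp_all
    ultimately show ?case
      using ds \<open>P (fst u) (snd u)\<close>
      by (intro conjI exI[of _ "ds @ [cut_division n u]"]) (simp_all add: successively_append_iff)
  qed
  with that show ?thesis
    by blast
qed

lemma remove_row_cuts:
  assumes "finite R" "R \<subseteq> Dr" "\<And>R'. R' \<subseteq> R \<Longrightarrow> P (Dr - R') Dc"
  shows "(remove_cut P)\<^sup>*\<^sup>* (Dr, Dc) (Dr - R, Dc)"
  using assms
proof (induction R rule: finite_induct)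
  case empty
  then show ?case
    by simp
next
  case (insert d R)
  have "R \<subseteq> Dr" "\<And>R'. R' \<subseteq> R \<Longrightarrow> P (Dr - R') Dc"
    using insert.prems by blast+
  then have "(remove_cut P)\<^sup>*\<^sup>* (Dr, Dc) (Dr - R, Dc)"
    by (rule insert.IH)
  also have "remove_cut P (Dr - R, Dc) (Dr - R - {d}, Dc)"
  proof (rule remove_row_cut)
    show "d \<in> Dr - R"
      using insert.hyps(2) insert.prems(1) by blast
    have "P (Dr - insert d R) Dc"
      by (rule insert.prems(2)) simp
    then show "P (Dr - R - {d}) Dc"
      by (simp only: Diff_insert[symmetric])
  qed
  finally show ?case
    by (simp only: Diff_insert[symmetric])
qed

lemma remove_column_cuts:
  assumes "finite R" "R \<subseteq> Dc" "\<And>R'. R' \<subseteq> R \<Longrightarrow> P Dr (Dc - R')"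
  shows "(remove_cut P)\<^sup>*\<^sup>* (Dr, Dc) (Dr, Dc - R)"
  using assms
proof (induction R rule: finite_induct)
  case empty
  then show ?case
    by simp
next
  case (insert d R)
  have "R \<subseteq> Dc" "\<And>R'. R' \<subseteq> R \<Longrightarrow> P Dr (Dc - R')"
    using insert.prems by blast+
  then have "(remove_cut P)\<^sup>*\<^sup>* (Dr, Dc) (Dr, Dc - R)"
    by (rule insert.IH)
  also have "remove_cut P (Dr, Dc - R) (Dr, Dc - R - {d})"
  proof (rule remove_column_cut)
    show "d \<in> Dc - R"
      using insert.hyps(2) insert.prems(1) by blast
    have "P Dr (Dc - insert d R)"
      by (rule insert.prems(2)) simp
    then show "P Dr (Dc - R - {d})"
      by (simp only: Diff_insert[symmetric])
  qed
  finally show ?case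
    by (simp only: Diff_insert[symmetric])
qed

section \<open>The complete binary tree in in-order numbering\<close>

function trailing_ones :: "nat \<Rightarrow> nat" where
  "trailing_ones x = (if odd x then Suc (trailing_ones (x div 2)) else 0)"
  by auto
termination by (relation "measure id") (auto elim!: oddE)

declare trailing_ones.simps [simp del]

lemma trailing_ones_even [simp]: "even x \<Longrightarrow> trailing_ones x = 0"
  by (simp add: trailing_ones.simps)

lemma trailing_ones_odd [simp]: "odd x \<Longrightarrow> trailing_ones x = Suc (trailing_ones (x div 2))"
  by (subst trailing_ones.simps) simp

lemma le_trailing_ones_iff: "l \<le> trailing_ones x \<longleftrightarrow> x mod 2^l = 2^l - 1"
proof (induction l arbitrary: x)
  case 0
  then show ?case by simp
next
  case (Suc l)
  have split: "x mod 2^Suc l = x mod 2 + 2 * (x div 2 mod 2^l)"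
    unfolding power_Suc mod_mult2_eq by simp
  have pos: "(2::nat)^l \<ge> 1"
    by simp
  show ?case
  proof (cases "odd x")
    case True
    then have "Suc l \<le> trailing_ones x \<longleftrightarrow> x div 2 mod 2^l = 2^l - 1"
      using Suc.IH by simp
    also have "\<dots> \<longleftrightarrow> 1 + 2 * (x div 2 mod 2^l) = 2 * 2^l - 1"
      using pos by linarith
    finally show ?thesis
      using split True by (simp add: odd_iff_mod_2_eq_one)
  next
    case False
    have "\<forall>a b::nat. 1 \<le> b \<longrightarrow> 2 * a \<noteq> 2 * b - 1"
      by presburger
    then have "2 * (x div 2 mod 2^l) \<noteq> 2 * 2^l - 1"
      using pos by blast
    then show ?thesis
      using split False by simp
  qed
qed

lemma trailing_ones_less_iff: "trailing_ones x < l \<longleftrightarrow> x mod 2^l \<noteq> 2^l - 1"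
  using le_trailing_ones_iff[of l x] by linarith

lemma trailing_ones_le:
  assumes "x < 2^K"
  shows "trailing_ones x \<le> K"
proof (rule ccontr)
  assume "\<not> trailing_ones x \<le> K"
  then have "x mod 2^Suc K = 2^Suc K - 1"
    using le_trailing_ones_iff[of "Suc K" x] by simp
  with assms show False
    by simp
qed

lemma mod_pow_Suc_trailing_ones: "x mod 2^Suc (trailing_ones x) = 2^trailing_ones x - 1"
proof -
  let ?h = "trailing_ones x"
  have "x mod 2^?h = 2^?h - 1"
    using le_trailing_ones_iff by blast
  moreover have "x mod 2^Suc ?h \<noteq> 2^Suc ?h - 1"
    using le_trailing_ones_iff[of "Suc ?h" x] by simp
  moreover have "x mod 2^Suc ?h = x mod 2^?h + 2^?h * (x div 2^?h mod 2)"
    by (metis mod_mult2_eq power_Suc2 add.commute)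
  moreover have "x div 2^?h mod 2 = 0 \<or> x div 2^?h mod 2 = 1"
    by auto
  ultimately show ?thesis
    by auto
qed

lemma sum_pow_trailing_ones: "2 * (\<Sum>x<2^K. 2^trailing_ones x) = (K + 2) * (2::nat)^K"
proof (induction K)
  case 0
  then show ?case by simp
next
  case (Suc K)
  have pairs: "(\<Sum>x<2 * m. f x) = (\<Sum>y<m. f (2 * y) + f (2 * y + 1))" for f :: "nat \<Rightarrow> nat" and m
    by (induction m) (simp_all add: add.assoc)
  have "(\<Sum>x<2^Suc K. (2::nat)^trailing_ones x) = (\<Sum>y<2^K. 1 + 2 * 2^trailing_ones y)"
    using pairs[of "\<lambda>x. 2^trailing_ones x" "2^K"] by simp
  also have "\<dots> = 2^K + 2 * (\<Sum>y<2^K. 2^trailing_ones y)"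
    by (simp only: sum.distrib sum_distrib_left) simp
  finally show ?case
    using Suc.IH by (simp add: algebra_simps)
qed

text \<open>Nodes are numbered in in-order, so that node z has height trailing_ones z; subtree l c is
  the c-th subtree of height l, i.e. the interval [c 2^l, (c+1) 2^l - 1) (see subtree_eq_interval).\<close>

definition subtree :: "nat \<Rightarrow> nat \<Rightarrow> nat set" where
  "subtree l c = {z. z div 2^l = c \<and> trailing_ones z < l}"

lemma subtree_eq_interval: "subtree l c = {c * 2^l ..< c * 2^l + (2^l - 1)}"
proof (intro set_eqI iffI)
  fix z
  assume "z \<in> subtree l c"
  then have z: "z div 2^l = c" "z mod 2^l \<noteq> 2^l - 1"
    unfolding subtree_def trailing_ones_less_iff by auto
  have "z mod 2^l < 2^l"
    by simp
  then have "z mod 2^l < 2^l - 1"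
    using z(2) by linarith
  moreover have "z = c * 2^l + z mod 2^l"
    using z(1) by (metis div_mult_mod_eq)
  ultimately show "z \<in> {c * 2^l ..< c * 2^l + (2^l - 1)}"
    by simp
next
  fix z
  assume "z \<in> {c * 2^l ..< c * 2^l + (2^l - 1)}"
  then obtain r where r: "z = c * 2^l + r" "r < 2^l - 1"
    by (metis atLeastLessThan_iff le_Suc_ex nat_add_left_cancel_less)
  then have "z div 2^l = c" "z mod 2^l = r"
    by simp_all
  then show "z \<in> subtree l c"
    using r(2) unfolding subtree_def trailing_ones_less_iff by auto
qed

lemma card_subtree: "card (subtree l c) = 2^l - 1"
  unfolding subtree_eq_interval by simp

lemma tree_eq_subtree: "{..<2^K - 1} = subtree K 0"
  by (simp add: subtree_eq_interval atLeast0LessThan)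

lemma subtree_subset_subtree:
  assumes "g \<le> l"
  shows "subtree g c \<subseteq> subtree l (c div 2^(l - g))"
proof -
  have "z div 2^g div 2^(l - g) = z div 2^l" for z :: nat
    using assms by (metis div_mult2_eq le_add_diff_inverse power_add)
  then show ?thesis
    using assms by (auto simp: subtree_def)
qed

lemma subtree_nested_or_disjoint:
  assumes "g \<le> l"
  shows "subtree g c \<subseteq> subtree l c' \<or> subtree g c \<inter> subtree l c' = {}"
proof (cases "c div 2^(l - g) = c'")
  case True
  then show ?thesis
    using subtree_subset_subtree[OF assms, of c] by simp
next
  case False
  then have "subtree l (c div 2^(l - g)) \<inter> subtree l c' = {}"
    by (auto simp: subtree_def)
  then show ?thesis
    using subtree_subset_subtree[OF assms, of c] by blast
qed

definition descendants :: "nat \<Rightarrow> nat set" where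
  "descendants x = subtree (Suc (trailing_ones x)) (x div 2^Suc (trailing_ones x))"

definition child_subtree :: "nat \<Rightarrow> bool \<Rightarrow> nat set" where
  "child_subtree x b = subtree (trailing_ones x) (2 * (x div 2^Suc (trailing_ones x)) + of_bool b)"

definition comparable :: "nat \<Rightarrow> nat \<Rightarrow> bool" where
  "comparable x y \<longleftrightarrow> y \<in> descendants x \<or> x \<in> descendants y"

lemma comparable_sym: "comparable x y \<longleftrightarrow> comparable y x"
  unfolding comparable_def by blast

lemma self_mem_descendants [simp]: "x \<in> descendants x"
  by (simp add: descendants_def subtree_def)

lemma descendants_subset_subtree:
  assumes "x \<in> subtree l c"
  shows "descendants x \<subseteq> subtree l c"
proof -
  have "Suc (trailing_ones x) \<le> l"
    using assms by (simp add: subtree_def)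
  from subtree_nested_or_disjoint[OF this] show ?thesis
    using assms self_mem_descendants[of x] unfolding descendants_def by blast
qed

lemma descendants_eq_children: "descendants x = insert x (child_subtree x False \<union> child_subtree x True)"
proof -
  let ?h = "trailing_ones x"
  let ?c = "x div 2^Suc ?h"
  have div_Suc: "z div 2^Suc ?h = z div 2^?h div 2" for z :: nat
    by (metis div_mult2_eq power_Suc2)
  have "z \<in> descendants x" if "z \<in> child_subtree x False \<union> child_subtree x True" for z
    using that unfolding descendants_def child_subtree_def subtree_def div_Suc by auto
  moreover have "z \<in> child_subtree x False \<union> child_subtree x True" if z: "z \<in> descendants x" "z \<noteq> x" for z
  proof -
    have "z div 2^Suc ?h = ?c" "trailing_ones z < Suc ?h"
      using z(1) by (auto simp: descendants_def subtree_def)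
    moreover have "trailing_ones z \<noteq> ?h"
    proof
      assume "trailing_ones z = ?h"
      then have "z mod 2^Suc ?h = x mod 2^Suc ?h"
        using mod_pow_Suc_trailing_ones[of z] mod_pow_Suc_trailing_ones[of x] by simp
      then show False
        using \<open>z div 2^Suc ?h = ?c\<close> z(2) by (metis div_mult_mod_eq)
    qed
    ultimately show ?thesis
      unfolding child_subtree_def subtree_def div_Suc by auto
  qed
  ultimately show ?thesis
    using self_mem_descendants by blast
qed

lemma card_child_subtree: "card (child_subtree x b) = 2^trailing_ones x - 1"
  by (simp add: child_subtree_def card_subtree)

lemma trailing_ones_less_if_descendant:
  "y \<in> descendants x \<Longrightarrow> y \<noteq> x \<Longrightarrow> trailing_ones y < trailing_ones x"
  using descendants_eq_children[of x] by (auto simp: child_subtree_def subtree_def)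

lemma not_comparable_if_disjoint_subtrees:
  assumes "x \<in> subtree l c" "y \<in> subtree l c'" "c \<noteq> c'"
  shows "\<not> comparable x y"
proof -
  have "y \<notin> descendants x" "x \<notin> descendants y"
    using descendants_subset_subtree[OF assms(1)] descendants_subset_subtree[OF assms(2)] assms
    by (auto simp: subtree_def)
  then show ?thesis
    by (simp add: comparable_def)
qed

lemma comparable_constant_on_subtree:
  assumes x: "x \<notin> subtree l c" and y: "y \<in> subtree l c" "y' \<in> subtree l c"
  shows "comparable x y \<longleftrightarrow> comparable x y'"
proof -
  have "x \<notin> descendants y" "x \<notin> descendants y'"
    using descendants_subset_subtree y x by blast+
  moreover have "y \<in> descendants x \<longleftrightarrow> y' \<in> descendants x"
  proof (cases "Suc (trailing_ones x) \<le> l")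
    case True
    from subtree_nested_or_disjoint[OF True] show ?thesis
      using x y self_mem_descendants[of x] unfolding descendants_def by blast
  next
    case False
    then have "l \<le> Suc (trailing_ones x)"
      by simp
    from subtree_nested_or_disjoint[OF this] show ?thesis
      using y unfolding descendants_def by blast
  qed
  ultimately show ?thesis
    unfolding comparable_def by blast
qed

lemma comparable_constant_on_descendants:
  assumes "y \<notin> descendants x" "z \<in> descendants x"
  shows "comparable y z \<longleftrightarrow> comparable y x"
  using comparable_constant_on_subtree[of y _ _ z x] assms self_mem_descendants[of x]
  unfolding descendants_def by blast

lemma not_comparable_children:
  "z \<in> child_subtree x b \<Longrightarrow> z' \<in> child_subtree x b' \<Longrightarrow> b \<noteq> b' \<Longrightarrow> \<not> comparable z z'"
  unfolding child_subtree_def by (erule not_comparable_if_disjoint_subtrees) auto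

section \<open>Row distances of the comparability matrix\<close>

definition tree_matrix :: "nat \<Rightarrow> bmat" where
  "tree_matrix K x y \<longleftrightarrow> x < 2^K - 1 \<and> y < 2^K - 1 \<and> comparable x y"

lemma transpose_tree_matrix: "transpose_mat (tree_matrix K) = tree_matrix K"
  unfolding transpose_mat_def by (intro ext) (auto simp: tree_matrix_def comparable_sym)

lemma child_subtree_in_tree:
  assumes "x < 2^K - 1"
  shows "child_subtree x b \<subseteq> descendants x \<inter> {..<2^K - 1}"
proof -
  have "x \<in> subtree K 0"
    using assms by (simp add: tree_eq_subtree[symmetric])
  then have "descendants x \<subseteq> {..<2^K - 1}"
    unfolding tree_eq_subtree by (rule descendants_subset_subtree)
  then show ?thesis
    using descendants_eq_children[of x] by (cases b) auto
qed

lemma tree_matrix_child_subtree: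
  "x < 2^K - 1 \<Longrightarrow> z \<in> child_subtree x b \<Longrightarrow> tree_matrix K x z"
  using child_subtree_in_tree unfolding tree_matrix_def comparable_def by blast

lemma tree_matrix_other_child:
  assumes "u < 2^K - 1" "v \<in> child_subtree u b" "z \<in> child_subtree u b'" "b \<noteq> b'"
  shows "tree_matrix K u z \<and> \<not> tree_matrix K v z"
proof -
  have "tree_matrix K u z"
    using assms(1,3) by (rule tree_matrix_child_subtree)
  moreover have "\<not> comparable v z"
    using not_comparable_children assms(2-4) by blast
  ultimately show ?thesis
    by (simp add: tree_matrix_def)
qed

lemma tree_matrix_not_comparable_child:
  assumes "\<not> comparable x y" "x < 2^K - 1" "z \<in> child_subtree x b"
  shows "\<not> tree_matrix K y z"
proof -
  have "y \<notin> descendants x" "z \<in> descendants x"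
    using assms child_subtree_in_tree[OF assms(2)] unfolding comparable_def by blast+
  then have "comparable y z \<longleftrightarrow> comparable y x"
    by (rule comparable_constant_on_descendants)
  then show ?thesis
    using assms(1) comparable_sym unfolding tree_matrix_def by blast
qed

lemma tree_rows_differ:
  assumes x: "x < 2^K - 1" and "y \<noteq> x"
  obtains Z where "Z \<subseteq> {..<2^K - 1}" "2^trailing_ones x - 1 \<le> card Z"
    "\<And>z. z \<in> Z \<Longrightarrow> tree_matrix K x z \<noteq> tree_matrix K y z"
proof -
  consider (below) "y \<in> descendants x" | (above) "x \<in> descendants y" "y < 2^K - 1"
    | (unrelated) "\<not> y < 2^K - 1 \<or> \<not> comparable x y"
    unfolding comparable_def by blast
  then show ?thesis
  proof cases
    case below
    then obtain b where b: "y \<in> child_subtree x b"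
      using \<open>y \<noteq> x\<close> descendants_eq_children[of x] by auto
    have "tree_matrix K x z \<noteq> tree_matrix K y z" if "z \<in> child_subtree x (\<not> b)" for z
      using tree_matrix_other_child[OF x b that] by blast
    with child_subtree_in_tree[OF x] show ?thesis
      by (intro that[of "child_subtree x (\<not> b)"]) (auto simp: card_child_subtree)
  next
    case above
    then obtain b where b: "x \<in> child_subtree y b"
      using \<open>y \<noteq> x\<close> descendants_eq_children[of y] by auto
    have "tree_matrix K x z \<noteq> tree_matrix K y z" if "z \<in> child_subtree y (\<not> b)" for z
      using tree_matrix_other_child[OF above(2) b that] by blast
    moreover have "2^trailing_ones x - 1 \<le> (2::nat)^trailing_ones y - 1"
      using trailing_ones_less_if_descendant[OF above(1)] \<open>y \<noteq> x\<close>
      by (intro diff_le_mono power_increasing) simp_all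
    ultimately show ?thesis
      using child_subtree_in_tree[OF above(2)]
      by (intro that[of "child_subtree y (\<not> b)"]) (auto simp: card_child_subtree)
  next
    case unrelated
    have "tree_matrix K x z \<noteq> tree_matrix K y z" if "z \<in> child_subtree x False" for z
      using tree_matrix_child_subtree[OF x that] tree_matrix_not_comparable_child[OF _ x that]
        unrelated by (auto simp: tree_matrix_def)
    with child_subtree_in_tree[OF x] show ?thesis
      by (intro that[of "child_subtree x False"]) (auto simp: card_child_subtree)
  qed
qed

lemma hamming_tree_rows:
  assumes "x < 2^K - 1" "y \<noteq> x" "2^K - 1 \<le> n"
  shows "2^trailing_ones x - 1 \<le> hamming n (tree_matrix K x) (tree_matrix K y)"
proof -
  obtain Z where Z: "Z \<subseteq> {..<2^K - 1}" "2^trailing_ones x - 1 \<le> card Z"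
    "\<And>z. z \<in> Z \<Longrightarrow> tree_matrix K x z \<noteq> tree_matrix K y z"
    using tree_rows_differ[OF assms(1,2)] by blast
  have "Z \<subseteq> {..<n}"
    using Z(1) assms(3) by auto
  then have "card Z \<le> hamming n (tree_matrix K x) (tree_matrix K y)"
    using Z(3) by (rule card_le_hamming)
  with Z(2) show ?thesis
    by linarith
qed

lemma sum_child_subtree_sizes_ge:
  "(K + 2) * 2^K \<le> 2 * (\<Sum>x<2^K - 1. 2^trailing_ones x - 1) + 4 * (2::nat)^K"
proof -
  let ?N = "(2::nat)^K - 1"
  have "(\<Sum>x<?N. 2^trailing_ones x - 1) + ?N = (\<Sum>x<?N. (2^trailing_ones x - 1) + 1)"
    by (simp only: sum.distrib) simp
  also have "\<dots> = (\<Sum>x<?N. 2^trailing_ones x)"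
    by (rule sum.cong) simp_all
  finally have "(\<Sum>x<?N. 2^trailing_ones x - 1) + ?N = (\<Sum>x<?N. (2::nat)^trailing_ones x)" .
  moreover have "(\<Sum>x<2^K. (2::nat)^trailing_ones x) = (\<Sum>x<?N. 2^trailing_ones x) + 2^trailing_ones ?N"
    by (metis Suc_diff_1 sum.lessThan_Suc zero_less_numeral zero_less_power)
  moreover have "(2::nat)^trailing_ones ?N \<le> 2^K"
    using trailing_ones_le[of ?N K] by (simp add: power_increasing)
  ultimately show ?thesis
    using sum_pow_trailing_ones[of K] by linarith
qed

lemma tree_row_hamming_coherence_ge:
  assumes "2^K - 1 \<le> n" "0 < n"
  shows "(K + 2) * 2^K \<le> 2 * row_hamming_coherence n (tree_matrix K) + 6 * 2^K"
proof -
  let ?N = "(2::nat)^K - 1"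
  define f :: "nat \<Rightarrow> nat" where "f x = (if x < ?N then 2^trailing_ones x - 1 else 0)" for x
  have "f x \<le> 2^K" for x
  proof (cases "x < ?N")
    case True
    then have "trailing_ones x \<le> K"
      by (intro trailing_ones_le) simp
    then have "(2::nat)^trailing_ones x \<le> 2^K"
      by (rule power_increasing) simp
    moreover have "f x = 2^trailing_ones x - 1"
      using True by (simp add: f_def)
    ultimately show ?thesis
      by linarith
  qed (simp add: f_def)
  then have "(\<Sum>x<n. f x) \<le> row_hamming_coherence n (tree_matrix K) + 2^K"
    by (rule sum_le_row_hamming_coherence[OF \<open>0 < n\<close>])
      (use assms(1) hamming_tree_rows in \<open>simp add: f_def\<close>)
  moreover have "(\<Sum>x<n. f x) = (\<Sum>x<?N. f x)"
    by (rule sum.mono_neutral_right) (use assms in \<open>auto simp: f_def\<close>)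
  moreover have "(\<Sum>x<?N. f x) = (\<Sum>x<?N. 2^trailing_ones x - 1)"
    by (rule sum.cong) (simp_all add: f_def)
  ultimately show ?thesis
    using sum_child_subtree_sizes_ge[of K] by linarith
qed

lemma tree_row_hamming_coherence_ge_n_ln_n:
  assumes K: "10 \<le> K" and n: "2^K \<le> n + 1" "n + 1 < 2^(K + 1)"
  shows "1/8 * real n * ln (real n) \<le> real (row_hamming_coherence n (tree_matrix K))"
proof -
  define P where "P = real (2^K)"
  have "(2::nat)^1 \<le> 2^K"
    using K by (intro power_increasing) simp_all
  then have "1 \<le> n"
    using n(1) by simp
  then have "(K + 2) * 2^K \<le> 2 * row_hamming_coherence n (tree_matrix K) + 6 * 2^K"
    using n(1) by (intro tree_row_hamming_coherence_ge) simp_all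
  then have "real ((K + 2) * 2^K) \<le> real (2 * row_hamming_coherence n (tree_matrix K) + 6 * 2^K)"
    by (simp only: of_nat_le_iff)
  then have coh: "real (K + 2) * P \<le> 2 * real (row_hamming_coherence n (tree_matrix K)) + 6 * P"
    unfolding P_def by (simp only: of_nat_mult of_nat_add of_nat_numeral)
  have "n < 2^(K + 1)"
    using n(2) by simp
  then have "real n < real (2^(K + 1))"
    by (simp only: of_nat_less_iff)
  then have "real n < 2 * P"
    unfolding P_def by simp
  have "ln (real n) \<le> ln (2 * P)"
    using \<open>real n < 2 * P\<close> \<open>1 \<le> n\<close> by simp
  also have "2 * P = 2^(K + 1)"
    unfolding P_def by simp
  also have "ln ((2::real)^(K + 1)) = real (K + 1) * ln 2"
    by (rule ln_realpow)
  also have "\<dots> \<le> real (K + 1)"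
    using ln_2_less_1 by simp
  finally have "ln (real n) \<le> real (K + 1)" .
  then have "1/8 * real n * ln (real n) \<le> 1/8 * (2 * P) * real (K + 1)"
    using \<open>real n < 2 * P\<close> \<open>1 \<le> n\<close> by (intro mult_mono) auto
  also have "\<dots> \<le> real (row_hamming_coherence n (tree_matrix K))"
  proof -
    have "9 * P \<le> real K * P"
      using K unfolding P_def by (intro mult_right_mono) auto
    moreover have "real K * P \<le> 2 * real (row_hamming_coherence n (tree_matrix K)) + 4 * P"
      using coh by (simp add: algebra_simps)
    ultimately have "real K * P + P \<le> 4 * real (row_hamming_coherence n (tree_matrix K))"
      by linarith
    then show ?thesis
      by (simp add: algebra_simps)
  qed
  finally show ?thesis .
qed

section \<open>A 3-wide merge sequence for the comparability matrix\<close>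

text \<open>The intervals of level_cuts K n h are the subtrees of height h, the single nodes of larger
  height and the single indices outside the tree.\<close>

definition level_cuts :: "nat \<Rightarrow> nat \<Rightarrow> nat \<Rightarrow> nat set" where
  "level_cuts K n h = {b. 0 < b \<and> b < n \<and> (2^K - 1 \<le> b \<or> b mod 2^h = 0 \<or> b mod 2^h = 2^h - 1)}"

definition tail_cuts :: "nat \<Rightarrow> nat \<Rightarrow> nat set" where
  "tail_cuts K n = {b. 0 < b \<and> b < n \<and> 2^K - 1 \<le> b}"

lemma level_cuts_subset: "level_cuts K n h \<subseteq> {1..<n}"
  by (auto simp: level_cuts_def)

lemma tail_cuts_subset_level_cuts: "tail_cuts K n \<subseteq> level_cuts K n h"
  by (auto simp: level_cuts_def tail_cuts_def)

lemma level_cuts_Suc_subset: "level_cuts K n (Suc h) \<subseteq> level_cuts K n h"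
proof
  fix b
  assume "b \<in> level_cuts K n (Suc h)"
  moreover have "b mod 2^h = 0" if "b mod 2^Suc h = 0"
    using that by (metis dvd_eq_mod_eq_0 dvd_trans le_imp_power_dvd le_SucI order_refl)
  moreover have "b mod 2^h = 2^h - 1" if "b mod 2^Suc h = 2^Suc h - 1"
    using that le_trailing_ones_iff[of "Suc h" b] le_trailing_ones_iff[of h b] by simp
  ultimately show "b \<in> level_cuts K n h"
    unfolding level_cuts_def by auto
qed

lemma level_cuts_0: "level_cuts K n 0 = {1..<n}"
  by (auto simp: level_cuts_def)

lemma level_cuts_top: "level_cuts K n K = tail_cuts K n"
proof (intro set_eqI iffI)
  fix b
  assume "b \<in> level_cuts K n K"
  then have b: "0 < b" "b < n" "2^K - 1 \<le> b \<or> b mod 2^K = 0 \<or> b mod 2^K = 2^K - 1"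
    unfolding level_cuts_def by blast+
  have "2^K - 1 \<le> b"
  proof (rule ccontr)
    assume "\<not> 2^K - 1 \<le> b"
    then have "b mod 2^K = b"
      by simp
    then show False
      using b \<open>\<not> 2^K - 1 \<le> b\<close> by linarith
  qed
  with b show "b \<in> tail_cuts K n"
    unfolding tail_cuts_def by blast
next
  fix b
  assume "b \<in> tail_cuts K n"
  then show "b \<in> level_cuts K n K"
    unfolding tail_cuts_def level_cuts_def by blast
qed

lemma cut_interval_tree_or_outside:
  assumes "tail_cuts K n \<subseteq> D" "D \<subseteq> {1..<n}" "X \<in> cut_intervals n D"
  shows "X \<subseteq> {..<2^K - 1} \<or> X \<inter> {..<2^K - 1} = {}"
proof -
  obtain a b where X: "X = {a..<b}" "b = n \<or> b \<in> D" "\<forall>d\<in>D. d \<le> a \<or> b \<le> d"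
    using assms(3) by (rule cut_intervalsE)
  have "b \<le> n"
    using X(2) assms(2) by auto
  have "2^K - 1 \<le> a \<or> b \<le> 2^K - 1"
  proof (rule ccontr)
    assume not: "\<not> (2^K - 1 \<le> a \<or> b \<le> 2^K - 1)"
    then have "2^K - 1 \<in> D"
      using assms(1) \<open>b \<le> n\<close> unfolding tail_cuts_def by auto
    then show False
      using X(3) not by auto
  qed
  then show ?thesis
    using X(1) by auto
qed

definition subtree_aligned :: "nat \<Rightarrow> nat set \<Rightarrow> bool" where
  "subtree_aligned l X \<longleftrightarrow> (\<exists>x. X = {x} \<and> l \<le> trailing_ones x) \<or> (\<exists>c. X \<subseteq> subtree l c)"

context
  fixes K n l :: nat and D X :: "nat set"
  assumes L: "level_cuts K n l \<subseteq> D" and D: "D \<subseteq> {1..<n}" and X: "X \<in> cut_intervals n D"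
begin

lemma boundary_le_cut_interval:
  assumes "m \<in> X" "z \<in> X" "0 < m" "m mod 2^l = 0 \<or> m mod 2^l = 2^l - 1"
  shows "m \<le> z"
proof -
  have "m < n"
    using assms(1) X D by (auto elim!: cut_intervalsE)
  then have "m \<in> D"
    using assms(3,4) L unfolding level_cuts_def by auto
  then show ?thesis
    using cut_interval_start_le[OF X _ assms(1,2)] by blast
qed

lemma cut_interval_eq_high_node:
  assumes x: "x \<in> X" "l \<le> trailing_ones x"
  shows "X = {x}"
proof -
  obtain a b where X_eq: "X = {a..<b}"
    using X by (rule cut_intervalsE)
  have x_mod: "x mod 2^l = 2^l - 1"
    using x(2) le_trailing_ones_iff by blast
  have "z = x" if "z \<in> X" for z
  proof (rule linorder_cases[of z x])
    assume "z < x"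
    then show ?thesis
      using boundary_le_cut_interval[OF x(1) that] x_mod by simp
  next
    assume "x < z"
    then have "Suc x \<in> X"
      using x(1) that X_eq by auto
    have "Suc x mod 2^l = Suc (x mod 2^l) mod 2^l"
      by (simp add: mod_Suc_eq)
    then have "Suc x mod 2^l = 0"
      using x_mod by simp
    then have "Suc x \<le> x"
      using boundary_le_cut_interval[OF \<open>Suc x \<in> X\<close> x(1)] by simp
    then show ?thesis
      by simp
  qed
  with x(1) show ?thesis
    by blast
qed

lemma cut_interval_subset_subtree:
  assumes "x \<in> X" "\<forall>z\<in>X. trailing_ones z < l"
  shows "X \<subseteq> subtree l (x div 2^l)"
proof -
  obtain a b where X_eq: "X = {a..<b}"
    using X by (rule cut_intervalsE)
  have same_div: "w div 2^l = u div 2^l" if "u \<in> X" "w \<in> X" "u \<le> w" for u w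
  proof (rule ccontr)
    assume "w div 2^l \<noteq> u div 2^l"
    moreover have "u div 2^l \<le> w div 2^l"
      using \<open>u \<le> w\<close> by (rule div_le_mono)
    ultimately have "u div 2^l < w div 2^l"
      by simp
    define m where "m = w div 2^l * 2^l"
    have "u < m"
    proof (rule ccontr)
      assume "\<not> u < m"
      then have "m div 2^l \<le> u div 2^l"
        by (simp add: div_le_mono)
      with \<open>u div 2^l < w div 2^l\<close> show False
        unfolding m_def by simp
    qed
    moreover have "m \<le> w"
      unfolding m_def by (metis div_mult_mod_eq le_add1)
    ultimately have "m \<in> X"
      using that X_eq by auto
    moreover have "m mod 2^l = 0"
      unfolding m_def by simp
    ultimately have "m \<le> u"
      using boundary_le_cut_interval[OF _ that(1)] \<open>u < m\<close> by simp
    with \<open>u < m\<close> show False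
      by simp
  qed
  have "z div 2^l = x div 2^l" if "z \<in> X" for z
    using same_div[OF assms(1) that] same_div[OF that assms(1)] by (cases "x \<le> z") auto
  then show ?thesis
    using assms(2) by (auto simp: subtree_def)
qed

lemma cut_interval_aligned: "subtree_aligned l X"
proof (cases "\<exists>x\<in>X. l \<le> trailing_ones x")
  case True
  then show ?thesis
    using cut_interval_eq_high_node unfolding subtree_aligned_def by blast
next
  case False
  obtain a b where "X = {a..<b}" "a < b"
    using X by (rule cut_intervalsE)
  then have "a \<in> X"
    by simp
  with False show ?thesis
    using cut_interval_subset_subtree unfolding subtree_aligned_def by (metis not_le)
qed

end

lemma constant_cell_outside_tree:
  assumes "X \<inter> {..<2^K - 1} = {} \<or> Y \<inter> {..<2^K - 1} = {}"
  shows "constant_cell (tree_matrix K) X Y"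
  by (rule constant_cell_if_all_False) (use assms in \<open>auto simp: tree_matrix_def\<close>)

lemma constant_cell_tree_matrix_commute:
  "constant_cell (tree_matrix K) Y X \<longleftrightarrow> constant_cell (tree_matrix K) X Y"
  using constant_cell_transpose[of "tree_matrix K"] by (simp add: transpose_tree_matrix)

lemma constant_cell_high_node:
  assumes "l \<le> trailing_ones x" "Y \<subseteq> subtree l c" "Y \<subseteq> {..<2^K - 1}"
  shows "constant_cell (tree_matrix K) {x} Y"
proof (rule constant_cell_singleton_row)
  fix j j'
  assume "j \<in> Y" "j' \<in> Y"
  moreover have "x \<notin> subtree l c"
    using assms(1) by (simp add: subtree_def)
  ultimately have "comparable x j \<longleftrightarrow> comparable x j'"
    using comparable_constant_on_subtree assms(2) by blast
  with \<open>j \<in> Y\<close> \<open>j' \<in> Y\<close> assms(3) show "tree_matrix K x j = tree_matrix K x j'"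
    unfolding tree_matrix_def by auto
qed

lemma constant_cell_disjoint_subtrees:
  assumes "X \<subseteq> subtree l c" "Y \<subseteq> subtree l c'" "c \<noteq> c'"
  shows "constant_cell (tree_matrix K) X Y"
proof (rule constant_cell_if_all_False)
  fix i j
  assume "i \<in> X" "j \<in> Y"
  with assms have "\<not> comparable i j"
    using not_comparable_if_disjoint_subtrees by blast
  then show "\<not> tree_matrix K i j"
    by (simp add: tree_matrix_def)
qed

lemma tree_matrix_nonconstant_cell:
  assumes X: "X \<subseteq> {..<2^K - 1}" "subtree_aligned l X"
    and Y: "Y \<subseteq> {..<2^K - 1}" "subtree_aligned l Y"
    and nc: "\<not> constant_cell (tree_matrix K) X Y"
  obtains c where "X \<subseteq> subtree l c" "Y \<subseteq> subtree l c"
proof -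
  from X(2) Y(2) consider (points) x y where "X = {x}" "Y = {y}"
    | (row) x c where "X = {x}" "l \<le> trailing_ones x" "Y \<subseteq> subtree l c"
    | (column) y c where "Y = {y}" "l \<le> trailing_ones y" "X \<subseteq> subtree l c"
    | (subtrees) c c' where "X \<subseteq> subtree l c" "Y \<subseteq> subtree l c'"
    unfolding subtree_aligned_def by blast
  then show ?thesis
  proof cases
    case points
    with nc show ?thesis
      by (simp add: constant_cell_def)
  next
    case row
    with nc Y(1) show ?thesis
      using constant_cell_high_node by blast
  next
    case column
    with nc X(1) show ?thesis
      using constant_cell_high_node constant_cell_tree_matrix_commute by blast
  next
    case subtrees
    with nc that show ?thesis
      using constant_cell_disjoint_subtrees by blast
  qed
qed

lemma subtree_boundary_points:
  assumes "z \<in> subtree (Suc h) c" "z mod 2^h = 0 \<or> z mod 2^h = 2^h - 1"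
  shows "z \<in> {c * 2^Suc h, c * 2^Suc h + 2^h - 1, c * 2^Suc h + 2^h}"
proof -
  have z: "z div 2^Suc h = c" "z mod 2^Suc h \<noteq> 2^Suc h - 1"
    using assms(1) unfolding subtree_def trailing_ones_less_iff by auto
  have "z mod 2^Suc h = z mod 2^h + 2^h * (z div 2^h mod 2)"
    by (metis mod_mult2_eq power_Suc2 add.commute)
  moreover have "z div 2^h mod 2 = 0 \<or> z div 2^h mod 2 = 1"
    by auto
  moreover have "(2::nat)^Suc h = 2 * 2^h" "(1::nat) \<le> 2^h"
    by simp_all
  ultimately have "z mod 2^Suc h = 0 \<or> z mod 2^Suc h = 2^h - 1 \<or> z mod 2^Suc h = 2^h"
    using assms(2) z(2) by auto
  moreover have "z = c * 2^Suc h + z mod 2^Suc h"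
    using z(1) by (metis div_mult_mod_eq)
  ultimately show ?thesis
    by auto
qed

text \<open>The cut pairs visited by the merge sequence: rows and columns both lie between two
  consecutive levels, or only cuts outside the tree are left.\<close>

definition admissible_cuts :: "nat \<Rightarrow> nat \<Rightarrow> nat set \<Rightarrow> nat set \<Rightarrow> bool" where
  "admissible_cuts K n Dr Dc \<longleftrightarrow>
     (\<exists>h. level_cuts K n (Suc h) \<subseteq> Dr \<and> Dr \<subseteq> level_cuts K n h \<and>
          level_cuts K n (Suc h) \<subseteq> Dc \<and> Dc \<subseteq> level_cuts K n h) \<or>
     (Dr \<subseteq> tail_cuts K n \<and> Dc \<subseteq> tail_cuts K n)"

lemma admissible_cuts_subset:
  "admissible_cuts K n Dr Dc \<Longrightarrow> Dr \<subseteq> {1..<n} \<and> Dc \<subseteq> {1..<n}"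
  using level_cuts_subset tail_cuts_subset_level_cuts[of K n 0] unfolding admissible_cuts_def by blast

lemma admissible_cuts_sym: "admissible_cuts K n Dr Dc \<longleftrightarrow> admissible_cuts K n Dc Dr"
  unfolding admissible_cuts_def by blast

text \<open>The three points are the first node, the root and the first node of the right child
  subtree of the height-(h+1) subtree containing x.\<close>

lemma level_nonconstant_cell_boundary:
  assumes Lr: "level_cuts K n (Suc h) \<subseteq> Dr" and Dr: "Dr \<subseteq> {1..<n}"
    and Lc: "level_cuts K n (Suc h) \<subseteq> Dc" and Dc: "Dc \<subseteq> level_cuts K n h"
    and X: "X \<in> cut_intervals n Dr" "x \<in> X" and Y: "Y \<in> cut_intervals n Dc"
    and nc: "\<not> constant_cell (tree_matrix K) X Y"
  defines "c \<equiv> x div 2^Suc h"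
  shows "Y \<inter> {c * 2^Suc h, c * 2^Suc h + 2^h - 1, c * 2^Suc h + 2^h} \<noteq> {}"
proof -
  have Dc1: "Dc \<subseteq> {1..<n}"
    using Dc level_cuts_subset by blast
  have tails: "tail_cuts K n \<subseteq> level_cuts K n (Suc h)"
    by (rule tail_cuts_subset_level_cuts)
  have "X \<inter> {..<2^K - 1} \<noteq> {}" "Y \<inter> {..<2^K - 1} \<noteq> {}"
    using nc constant_cell_outside_tree by blast+
  then have XT: "X \<subseteq> {..<2^K - 1}" and YT: "Y \<subseteq> {..<2^K - 1}"
    using cut_interval_tree_or_outside[OF order_trans[OF tails Lr] Dr X(1)]
      cut_interval_tree_or_outside[OF order_trans[OF tails Lc] Dc1 Y] by blast+
  obtain c' where c': "X \<subseteq> subtree (Suc h) c'" "Y \<subseteq> subtree (Suc h) c'"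
    using tree_matrix_nonconstant_cell[OF XT cut_interval_aligned[OF Lr Dr X(1)]
        YT cut_interval_aligned[OF Lc Dc1 Y] nc] .
  then have "c' = c"
    using X(2) unfolding c_def subtree_def by auto
  obtain a b where "Y = {a..<b}" "a < b" "a = 0 \<or> a \<in> Dc"
    using Y by (rule cut_intervalsE)
  then have "a \<in> Y" "a = 0 \<or> a \<in> Dc"
    by simp_all
  moreover have "a < 2^K - 1"
    using YT \<open>a \<in> Y\<close> by auto
  ultimately have "a mod 2^h = 0 \<or> a mod 2^h = 2^h - 1"
    using Dc unfolding level_cuts_def by auto
  then have "a \<in> {c * 2^Suc h, c * 2^Suc h + 2^h - 1, c * 2^Suc h + 2^h}"
    using c'(2) \<open>c' = c\<close> \<open>a \<in> Y\<close> by (intro subtree_boundary_points) auto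
  with \<open>a \<in> Y\<close> show ?thesis
    by blast
qed

lemma level_row_width:
  assumes Lr: "level_cuts K n (Suc h) \<subseteq> Dr" and Dr: "Dr \<subseteq> {1..<n}"
    and Lc: "level_cuts K n (Suc h) \<subseteq> Dc" and Dc: "Dc \<subseteq> level_cuts K n h"
    and X: "X \<in> cut_intervals n Dr"
  shows "card {Y \<in> cut_intervals n Dc. \<not> constant_cell (tree_matrix K) X Y} \<le> 3"
proof (cases "X = {}")
  case True
  then have none: "{Y \<in> cut_intervals n Dc. \<not> constant_cell (tree_matrix K) X Y} = {}"
    by (simp add: constant_cell_def)
  show ?thesis
    unfolding none by simp
next
  case False
  then obtain x where "x \<in> X"
    by blast
  have Dc1: "Dc \<subseteq> {1..<n}"
    using Dc level_cuts_subset by blast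
  define c where "c = x div 2^Suc h"
  define S where "S = {c * 2^Suc h, c * 2^Suc h + 2^h - 1, c * 2^Suc h + 2^h}"
  have "{Y \<in> cut_intervals n Dc. \<not> constant_cell (tree_matrix K) X Y}
      \<subseteq> {Y \<in> cut_intervals n Dc. Y \<inter> S \<noteq> {}}"
    using level_nonconstant_cell_boundary[OF Lr Dr Lc Dc X \<open>x \<in> X\<close>]
    unfolding S_def c_def by blast
  then have "card {Y \<in> cut_intervals n Dc. \<not> constant_cell (tree_matrix K) X Y}
      \<le> card {Y \<in> cut_intervals n Dc. Y \<inter> S \<noteq> {}}"
    by (rule card_mono[rotated]) (simp add: finite_cut_intervals[OF Dc1])
  also have "\<dots> \<le> card S"
    by (rule card_meeting_le[OF cut_intervals_disjoint[OF Dc1]]) (simp_all add: S_def)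
  also have "card S \<le> 3"
    unfolding S_def by (simp add: card_insert_if)
  finally show ?thesis .
qed

lemma tail_row_width:
  assumes Dc: "Dc \<subseteq> tail_cuts K n"
  shows "card {Y \<in> cut_intervals n Dc. \<not> constant_cell (tree_matrix K) X Y} \<le> 3"
proof -
  have Dc1: "Dc \<subseteq> {1..<n}"
    using Dc by (auto simp: tail_cuts_def)
  have "Y \<inter> {0} \<noteq> {}" if Y: "Y \<in> cut_intervals n Dc"
    and nc: "\<not> constant_cell (tree_matrix K) X Y" for Y
  proof -
    obtain y where "y \<in> Y" "y < 2^K - 1"
      using nc constant_cell_outside_tree by blast
    moreover obtain a b where "Y = {a..<b}" "a = 0 \<or> a \<in> Dc"
      using Y by (rule cut_intervalsE)
    ultimately show ?thesis
      using Dc by (auto simp: tail_cuts_def)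
  qed
  then have "card {Y \<in> cut_intervals n Dc. \<not> constant_cell (tree_matrix K) X Y}
      \<le> card {Y \<in> cut_intervals n Dc. Y \<inter> {0} \<noteq> {}}"
    by (intro card_mono) (auto simp: finite_cut_intervals[OF Dc1])
  also have "\<dots> \<le> card {0::nat}"
    by (rule card_meeting_le) (use cut_intervals_disjoint[OF Dc1] in auto)
  finally show ?thesis
    by simp
qed

lemma admissible_row_width:
  assumes "admissible_cuts K n Dr Dc" "X \<in> cut_intervals n Dr"
  shows "card {Y \<in> cut_intervals n Dc. \<not> constant_cell (tree_matrix K) X Y} \<le> 3"
proof -
  from assms(1) consider (level) h where "level_cuts K n (Suc h) \<subseteq> Dr" "Dr \<subseteq> level_cuts K n h"
      "level_cuts K n (Suc h) \<subseteq> Dc" "Dc \<subseteq> level_cuts K n h"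
    | (tail) "Dc \<subseteq> tail_cuts K n"
    unfolding admissible_cuts_def by blast
  then show ?thesis
  proof cases
    case level
    moreover have "Dr \<subseteq> {1..<n}"
      using level(2) level_cuts_subset by blast
    ultimately show ?thesis
      using level_row_width assms(2) by blast
  next
    case tail
    then show ?thesis
      by (rule tail_row_width)
  qed
qed

lemma admissible_cuts_wide:
  assumes "admissible_cuts K n Dr Dc"
  shows "d_wide 3 (tree_matrix K) (cut_division n (Dr, Dc))"
  unfolding d_wide_def cut_division_def fst_conv snd_conv
proof (intro conjI ballI)
  fix X
  assume "X \<in> cut_intervals n Dr"
  with assms show "card {Y \<in> cut_intervals n Dc. \<not> constant_cell (tree_matrix K) X Y} \<le> 3"
    by (rule admissible_row_width)
next
  fix Y
  assume "Y \<in> cut_intervals n Dc"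
  with assms have "card {X \<in> cut_intervals n Dr. \<not> constant_cell (tree_matrix K) Y X} \<le> 3"
    by (intro admissible_row_width) (simp_all add: admissible_cuts_sym)
  then show "card {X \<in> cut_intervals n Dr. \<not> constant_cell (tree_matrix K) X Y} \<le> 3"
    by (simp add: constant_cell_tree_matrix_commute)
qed

lemma remove_level_cuts:
  "(remove_cut (admissible_cuts K n))\<^sup>*\<^sup>* (level_cuts K n h, level_cuts K n h)
     (level_cuts K n (Suc h), level_cuts K n (Suc h))"
proof -
  let ?L = "level_cuts K n h" and ?L' = "level_cuts K n (Suc h)"
  have fin: "finite (?L - ?L')"
    using level_cuts_subset[of K n h] by (meson finite_Diff finite_atLeastLessThan finite_subset)
  have sub: "?L' \<subseteq> ?L"
    by (rule level_cuts_Suc_subset)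
  have admissible: "admissible_cuts K n Dr Dc"
    if "?L' \<subseteq> Dr" "Dr \<subseteq> ?L" "?L' \<subseteq> Dc" "Dc \<subseteq> ?L" for Dr Dc
    unfolding admissible_cuts_def by (intro disjI1 exI[of _ h]) (use that in blast)
  have rows: "(remove_cut (admissible_cuts K n))\<^sup>*\<^sup>* (?L, ?L) (?L - (?L - ?L'), ?L)"
  proof (rule remove_row_cuts[OF fin])
    show "admissible_cuts K n (?L - R') ?L" if "R' \<subseteq> ?L - ?L'" for R'
      using that sub by (intro admissible) blast+
  qed blast
  have columns: "(remove_cut (admissible_cuts K n))\<^sup>*\<^sup>* (?L', ?L) (?L', ?L - (?L - ?L'))"
  proof (rule remove_column_cuts[OF fin])
    show "admissible_cuts K n ?L' (?L - R')" if "R' \<subseteq> ?L - ?L'" for R'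
      using that sub by (intro admissible) blast+
  qed blast
  have "?L - (?L - ?L') = ?L'"
    using sub by blast
  with rows columns show ?thesis
    by (metis rtranclp_trans)
qed

lemma remove_tail_cuts:
  "(remove_cut (admissible_cuts K n))\<^sup>*\<^sup>* (tail_cuts K n, tail_cuts K n) ({}, {})"
proof -
  let ?T = "tail_cuts K n"
  have fin: "finite ?T"
    by (simp add: tail_cuts_def)
  have admissible: "admissible_cuts K n Dr Dc" if "Dr \<subseteq> ?T" "Dc \<subseteq> ?T" for Dr Dc
    unfolding admissible_cuts_def using that by blast
  have rows: "(remove_cut (admissible_cuts K n))\<^sup>*\<^sup>* (?T, ?T) (?T - ?T, ?T)"
    by (rule remove_row_cuts[OF fin subset_refl]) (rule admissible; blast)
  have columns: "(remove_cut (admissible_cuts K n))\<^sup>*\<^sup>* ({}, ?T) ({}, ?T - ?T)"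
    by (rule remove_column_cuts[OF fin subset_refl]) (rule admissible; blast)
  from rows columns show ?thesis
    unfolding Diff_cancel by (rule rtranclp_trans)
qed

lemma remove_cuts_down_to_level:
  "(remove_cut (admissible_cuts K n))\<^sup>*\<^sup>* ({1..<n}, {1..<n}) (level_cuts K n h, level_cuts K n h)"
proof (induction h)
  case 0
  show ?case
    unfolding level_cuts_0 by (rule rtranclp.rtrancl_refl)
next
  case (Suc h)
  from Suc.IH remove_level_cuts show ?case
    by (rule rtranclp_trans)
qed

lemma twin_ordered_tree_matrix:
  assumes "0 < n"
  shows "twin_ordered n 3 (tree_matrix K)"
proof -
  let ?s = "({1..<n}, {1..<n})"
  have start: "admissible_cuts K n (fst ?s) (snd ?s)"
    unfolding admissible_cuts_def fst_conv snd_conv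
    using level_cuts_subset[of K n 1] by (intro disjI1 exI[of _ 0]) (simp add: level_cuts_0)
  have path: "(remove_cut (admissible_cuts K n))\<^sup>*\<^sup>* ?s ({}, {})"
    using remove_cuts_down_to_level[of K n K] remove_tail_cuts
    unfolding level_cuts_top by (rule rtranclp_trans)
  obtain ds where ds: "ds \<noteq> []" "hd ds = cut_division n ?s"
    "last ds = cut_division n ({}, {})" "successively division_step ds"
    "\<forall>D\<in>set ds. d_wide 3 (tree_matrix K) D"
  proof (rule merge_path_of_remove_cuts[of "admissible_cuts K n" n 3 "tree_matrix K" ?s])
    show "Dr \<subseteq> {1..<n} \<and> Dc \<subseteq> {1..<n}" if "admissible_cuts K n Dr Dc" for Dr Dc
      using that by (rule admissible_cuts_subset)
    show "d_wide 3 (tree_matrix K) (cut_division n (Dr, Dc))" if "admissible_cuts K n Dr Dc" for Dr Dc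
      using that by (rule admissible_cuts_wide)
  qed (use start path in simp_all)
  have "merge_sequence n ds"
    unfolding merge_sequence_def successively_conv_nth[symmetric]
    using ds(1-4) cut_intervals_all_cuts cut_intervals_no_cuts[OF assms] by (simp add: cut_division_def)
  with ds(5) show ?thesis
    unfolding twin_ordered_def by blast
qed

lemma twin_width_tree_matrix:
  assumes "0 < n"
  shows "twin_width n (tree_matrix K) \<le> 3"
proof -
  have "\<exists>\<sigma> \<tau>. \<sigma> permutes {..<n} \<and> \<tau> permutes {..<n} \<and> twin_ordered n 3 (\<lambda>i j. tree_matrix K (\<sigma> i) (\<tau> j))"
    using twin_ordered_tree_matrix[OF assms] permutes_id by (intro exI[of _ id]) auto
  then show ?thesis
    unfolding twin_width_def by (rule Least_le)
qed

lemma tree_height_exists: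
  fixes n :: nat
  assumes "1023 \<le> n"
  obtains K where "10 \<le> K" "2^K \<le> n + 1" "n + 1 < 2^(K + 1)"
proof -
  obtain K where K: "2^K \<le> n + 1" "n + 1 < 2^(K + 1)"
    using ex_power_ivl1[of 2 "n + 1"] by auto
  have "10 \<le> K"
  proof (rule ccontr)
    assume "\<not> 10 \<le> K"
    then have "(2::nat)^(K + 1) \<le> 2^10"
      by (intro power_increasing) simp_all
    with K(2) assms show False
      by simp
  qed
  with K that show ?thesis
    by blast
qed

theorem theorem4:
  shows "\<exists>c::real. c > 0 \<and> (\<exists>N::nat. \<forall>n\<ge>N. \<exists>M::bmat.
           twin_width n M \<le> 3 \<and>
           real (row_hamming_coherence n M) \<ge> c * real n * ln (real n) \<and>
           real (col_hamming_coherence n M) \<ge> c * real n * ln (real n))"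
proof (intro exI[of _ "1/8"] conjI exI[of _ "1023::nat"] allI impI)
  show "(0::real) < 1/8"
    by simp
  fix n :: nat
  assume "1023 \<le> n"
  then obtain K where K: "10 \<le> K" "2^K \<le> n + 1" "n + 1 < 2^(K + 1)"
    by (rule tree_height_exists)
  have "twin_width n (tree_matrix K) \<le> 3"
    using \<open>1023 \<le> n\<close> by (intro twin_width_tree_matrix) simp
  moreover have row: "1/8 * real n * ln (real n) \<le> real (row_hamming_coherence n (tree_matrix K))"
    using K by (rule tree_row_hamming_coherence_ge_n_ln_n)
  moreover have "1/8 * real n * ln (real n) \<le> real (col_hamming_coherence n (tree_matrix K))"
    using row unfolding col_hamming_coherence_def transpose_tree_matrix .
  ultimately show "\<exists>M. twin_width n M \<le> 3 \<and> 1/8 * real n * ln (real n) \<le> real (row_hamming_coherence n M)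
      \<and> 1/8 * real n * ln (real n) \<le> real (col_hamming_coherence n M)"
    by blast
qed

end
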